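(* Let $0\le q<d$ and let $X,Y$ be cubical sets in $\mathbb{R}^d$ such that the symmetric difference $X\triangle Y$ is bounded. Then there exists $\Delta_\infty\in\mathbb{Z}$ such that for every sequence of boxes $A_n=x_n+[-m_n,m_n]^d$ ($x_n\in\mathbb{Z}^d$, $m_n\in\mathbb{N}$) whose lattice point sets satisfy $\liminf_n (A_n\cap\mathbb{Z}^d)=\mathbb{Z}^d$ (i.e. every $z\in\mathbb{Z}^d$ lies in $A_n$ for all sufficiently large $n$), there exists $n_\infty\in\mathbb{N}$ such that $$\beta_q(X\cap A_n)-\beta_q(Y\cap A_n)=\Delta_\infty\quad\text{for all }n\ge n_\infty.$$
   Context: An elementary interval is $[l,l+1]$ or $[l]=[l,l]$ with $l\in\mathbb{Z}$; an elementary cube in $\mathbb{R}^d$ is a product of $d$ elementary intervals, of dimension equal to the number of nondegenerate factors. A cubical set is a (possibly infinite) union of elementary cubes; the intersection of a cubical set with a box $x+[-m,m]^d$, $x\in\mathbb{Z}^d$, is a bounded cubical set. For a cubical set $X$, $C_k(X)$ is the free $\mathbb{Z}$-module on the $k$-dimensional elementary cubes contained in $X$, with the standard cubical boundary operator $\partial\widehat Q=\sum_{j=1}^k(-1)^{j-1}(\widehat{Q_j^+}-\widehat{Q_j^-})$; $H_k(X)$ is the resulting homology, and for bounded $X$, $\beta_k(X)$ is the rank of the free part of $H_k(X)$. *)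

theory Defs
  imports Complex_Main
begin

text \<open>An elementary cube in R^d is a list of d
elementary intervals; an interval is encoded as (l, b): b = True means [l, l+1]
(nondegenerate), b = False means [l] = [l,l].\<close>

type_synonym ecube = "(int \<times> bool) list"

definition cube_dim :: "ecube \<Rightarrow> nat" where
  "cube_dim Q = length (filter snd Q)"

definition realize :: "ecube \<Rightarrow> real list set" where
  "realize Q = {x. length x = length Q \<and>
     (\<forall>i<length Q. real_of_int (fst (Q!i)) \<le> x!i \<and>
                    x!i \<le> real_of_int (fst (Q!i)) + (if snd (Q!i) then 1 else 0))}"

definition cubical_set :: "nat \<Rightarrow> real list set \<Rightarrow> bool" where
  "cubical_set d X \<longleftrightarrow> (\<exists>S. (\<forall>Q\<in>S. length Q = d) \<and> X = \<Union>(realize ` S))"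

definition box :: "nat \<Rightarrow> int list \<Rightarrow> nat \<Rightarrow> real list set" where
  "box d x m = {y. length y = d \<and> (\<forall>i<d. \<bar>y!i - real_of_int (x!i)\<bar> \<le> real m)}"

definition bounded_set :: "nat \<Rightarrow> real list set \<Rightarrow> bool" where
  "bounded_set d S \<longleftrightarrow> (\<exists>R. \<forall>y\<in>S. \<forall>i<d. \<bar>y!i\<bar> \<le> R)"

definition nondeg :: "ecube \<Rightarrow> nat list" where
  "nondeg Q = filter (\<lambda>i. snd (Q!i)) [0..<length Q]"

definition face_plus :: "ecube \<Rightarrow> nat \<Rightarrow> ecube" where
  "face_plus Q i = Q[i := (fst (Q!i) + 1, False)]"

definition face_minus :: "ecube \<Rightarrow> nat \<Rightarrow> ecube" where
  "face_minus Q i = Q[i := (fst (Q!i), False)]"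

definition cube_bd :: "ecube \<Rightarrow> ecube \<Rightarrow> int" where
  "cube_bd Q P = (\<Sum>j<length (nondeg Q).
      (-1) ^ j * ((if P = face_plus Q (nondeg Q ! j) then 1 else 0)
                - (if P = face_minus Q (nondeg Q ! j) then 1 else 0)))"

text \<open>Chains are finitely supported integer functions on elementary cubes.\<close>
definition chain_bd :: "(ecube \<Rightarrow> int) \<Rightarrow> ecube \<Rightarrow> int" where
  "chain_bd c P = (\<Sum>Q\<in>{Q. c Q \<noteq> 0}. c Q * cube_bd Q P)"

definition chains :: "nat \<Rightarrow> nat \<Rightarrow> real list set \<Rightarrow> (ecube \<Rightarrow> int) set" where
  "chains d k X = {c. finite {Q. c Q \<noteq> 0} \<and>
      (\<forall>Q. c Q \<noteq> 0 \<longrightarrow> length Q = d \<and> cube_dim Q = k \<and> realize Q \<subseteq> X)}"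

definition cycles :: "nat \<Rightarrow> nat \<Rightarrow> real list set \<Rightarrow> (ecube \<Rightarrow> int) set" where
  "cycles d k X = {c \<in> chains d k X. chain_bd c = (\<lambda>_. 0)}"

definition boundaries :: "nat \<Rightarrow> nat \<Rightarrow> real list set \<Rightarrow> (ecube \<Rightarrow> int) set" where
  "boundaries d k X = chain_bd ` chains d (Suc k) X"

text \<open>Rank of H_k(X) = Z_k/B_k: the maximal number of elements of H_k that are
  Z-linearly independent (= rank of the free part for finitely generated groups).\<close>
definition betti :: "nat \<Rightarrow> nat \<Rightarrow> real list set \<Rightarrow> nat" where
  "betti d k X = Sup {n. \<exists>z :: nat \<Rightarrow> ecube \<Rightarrow> int. (\<forall>i<n. z i \<in> cycles d k X) \<and>
      (\<forall>a :: nat \<Rightarrow> int. (\<lambda>P. \<Sum>i<n. a i * z i P) \<in> boundaries d k X \<longrightarrow> (\<forall>i<n. a i = 0))}"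

end

theory Submission
  imports Defs
begin

text \<open>Adding one k-cube Q to a finite face-closed set of cubes C containing the faces of Q
  changes a single Betti number: if some nonzero multiple of the boundary of Q already bounds in C,
  then beta_k grows by one, otherwise beta_(k-1) drops by one. Whether the first case occurs is
  witnessed by finitely many cubes, so along any exhausting sequence of boxes A_n the effect of
  adding Q to C \<inter> A_n is eventually constant. Since the symmetric difference of X and Y is
  bounded, only finitely many cubes lie in one of X, Y but not in the other; adding them in order of
  increasing dimension keeps every intermediate set face-closed, so
  beta_q((X \<union> Y) \<inter> A_n) - beta_q(Y \<inter> A_n) and the same difference for X stabilise, and so
  does their difference.\<close>

section \<open>Rank modulo a submodule of integer-valued functions\<close>

definition lincomb :: "(nat \<Rightarrow> int) \<Rightarrow> (nat \<Rightarrow> 'a \<Rightarrow> int) \<Rightarrow> nat \<Rightarrow> 'a \<Rightarrow> int" where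
  "lincomb a z n = (\<lambda>P. \<Sum>i<n. a i * z i P)"

definition skip :: "nat \<Rightarrow> nat \<Rightarrow> nat" where
  "skip j i = (if i < j then i else Suc i)"

definition insert_at :: "nat \<Rightarrow> int \<Rightarrow> (nat \<Rightarrow> int) \<Rightarrow> nat \<Rightarrow> int" where
  "insert_at j c a = (\<lambda>i. if i = j then c else if i < j then a i else a (i - 1))"

lemma insert_at_skip [simp]: "insert_at j c a (skip j i) = a i"
  by (auto simp: insert_at_def skip_def)

lemma insert_at_same [simp]: "insert_at j c a j = c"
  by (simp add: insert_at_def)

lemma skip_less_Suc: "i < n \<Longrightarrow> j \<le> n \<Longrightarrow> skip j i < Suc n"
  by (auto simp: skip_def)

lemma image_skip_lessThan:
  assumes "j \<le> n" shows "skip j ` {..<n} = {..<Suc n} - {j}"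
proof
  show "skip j ` {..<n} \<subseteq> {..<Suc n} - {j}" using assms by (auto simp: skip_def)
next
  show "{..<Suc n} - {j} \<subseteq> skip j ` {..<n}"
  proof
    fix i assume i: "i \<in> {..<Suc n} - {j}"
    show "i \<in> skip j ` {..<n}"
    proof (cases "i < j")
      case True then show ?thesis using assms by (auto simp: skip_def image_iff intro!: bexI[of _ i])
    next
      case False then show ?thesis using i by (auto simp: skip_def image_iff intro!: bexI[of _ "i - 1"])
    qed
  qed
qed

lemma sum_lessThan_Suc_skip:
  assumes "j \<le> n"
  shows "(\<Sum>i<Suc n. f i) = f j + (\<Sum>i<n. f (skip j i))"
proof -
  have "inj_on (skip j) {..<n}" by (auto simp: inj_on_def skip_def split: if_splits)
  then have "(\<Sum>i<n. f (skip j i)) = (\<Sum>i\<in>{..<Suc n} - {j}. f i)"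
    using sum.reindex[of "skip j" "{..<n}" f] image_skip_lessThan[OF assms] by simp
  moreover have "(\<Sum>i<Suc n. f i) = f j + (\<Sum>i\<in>{..<Suc n} - {j}. f i)"
    using assms by (intro sum.remove) auto
  ultimately show ?thesis by simp
qed

lemma lincomb_insert_at:
  assumes "j \<le> n"
  shows "lincomb (insert_at j c a) z (Suc n) P = c * z j P + lincomb a (\<lambda>i. z (skip j i)) n P"
  unfolding lincomb_def using sum_lessThan_Suc_skip[OF assms, of "\<lambda>i. insert_at j c a i * z i P"]
  by simp

lemma lincomb_fun_upd: "lincomb a (z(n := v)) (Suc n) = (\<lambda>P. lincomb a z n P + a n * v P)"
proof
  fix P
  have "(\<Sum>i<n. a i * (z(n := v)) i P) = (\<Sum>i<n. a i * z i P)" by (rule sum.cong) auto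
  then show "lincomb a (z(n := v)) (Suc n) P = lincomb a z n P + a n * v P" by (simp add: lincomb_def)
qed

lemma lincomb_lin:
  "lincomb (\<lambda>i. s * a i + t * b i) z n P = s * lincomb a z n P + t * lincomb b z n P"
  by (simp add: lincomb_def distrib_right sum.distrib sum_distrib_left mult.assoc)

lemma lincomb_scale: "lincomb (\<lambda>i. s * a i) z n P = s * lincomb a z n P"
  by (simp add: lincomb_def sum_distrib_left mult.assoc)

lemma lincomb_eq_zero: "(\<forall>i<n. a i = 0) \<Longrightarrow> lincomb a z n = (\<lambda>_. 0)"
  by (simp add: lincomb_def)

text \<open>One step of Gaussian elimination: with the j-th vector as pivot, the coefficients t are
  eliminated from the remaining vectors.\<close>
definition pivot :: "(nat \<Rightarrow> int) \<Rightarrow> nat \<Rightarrow> (nat \<Rightarrow> 'a \<Rightarrow> int) \<Rightarrow> nat \<Rightarrow> 'a \<Rightarrow> int" where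
  "pivot t j z = (\<lambda>i P. t j * z (skip j i) P - t (skip j i) * z j P)"

definition pivot_coeffs :: "nat \<Rightarrow> (nat \<Rightarrow> int) \<Rightarrow> nat \<Rightarrow> (nat \<Rightarrow> int) \<Rightarrow> nat \<Rightarrow> int" where
  "pivot_coeffs n t j b = insert_at j (- (\<Sum>i<n. b i * t (skip j i))) (\<lambda>i. t j * b i)"

lemma lincomb_pivot:
  assumes "j \<le> n"
  shows "lincomb b (pivot t j z) n = lincomb (pivot_coeffs n t j b) z (Suc n)"
proof
  fix P
  have "lincomb b (pivot t j z) n P
      = (\<Sum>i<n. t j * b i * z (skip j i) P) - (\<Sum>i<n. b i * t (skip j i)) * z j P"
    by (simp add: lincomb_def pivot_def sum_subtractf sum_distrib_left sum_distrib_right right_diff_distrib mult_ac)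
  also have "\<dots> = lincomb (pivot_coeffs n t j b) z (Suc n) P"
    unfolding pivot_coeffs_def lincomb_insert_at[OF assms] by (simp add: lincomb_def mult_ac)
  finally show "lincomb b (pivot t j z) n P = lincomb (pivot_coeffs n t j b) z (Suc n) P" .
qed

lemma pivot_coeffs_skip: "pivot_coeffs n t j b (skip j i) = t j * b i"
  by (simp add: pivot_coeffs_def)

lemma pivot_coeffs_nontrivial:
  assumes "t j \<noteq> 0" "i < n" "b i \<noteq> 0" "j \<le> n"
  shows "\<exists>k<Suc n. pivot_coeffs n t j b k \<noteq> 0"
  using assms skip_less_Suc[OF assms(2,4)] by (intro exI[of _ "skip j i"]) (simp add: pivot_coeffs_skip)

lemma lincomb_dependent_if_card_less:
  assumes "finite F" and "\<forall>i<n. \<forall>P. z i P \<noteq> 0 \<longrightarrow> P \<in> F" and "card F < n"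
  shows "\<exists>a. (\<exists>i<n. a i \<noteq> 0) \<and> lincomb a z n = (\<lambda>_. 0)"
  using assms
proof (induction F arbitrary: n z rule: finite_induct)
  case empty
  then have "lincomb (\<lambda>_. 1) z n = (\<lambda>_. 0)" by (auto simp: lincomb_def)
  then show ?case using empty.prems(2) by (intro exI[of _ "\<lambda>_. 1"]) auto
next
  case (insert P0 F)
  show ?case
  proof (cases "\<forall>i<n. z i P0 = 0")
    case True
    then show ?thesis using insert by (metis card_insert_le insert_iff order.strict_trans1)
  next
    case False
    then obtain j where j: "j < n" "z j P0 \<noteq> 0" by auto
    then obtain n' where n': "n = Suc n'" by (cases n) auto
    let ?t = "\<lambda>i. z i P0"
    have "\<forall>i<n'. \<forall>P. pivot ?t j z i P \<noteq> 0 \<longrightarrow> P \<in> F"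
    proof (intro allI impI)
      fix i P assume i: "i < n'" and P: "pivot ?t j z i P \<noteq> 0"
      then have "P \<noteq> P0" by (auto simp: pivot_def)
      moreover have "z (skip j i) P \<noteq> 0 \<or> z j P \<noteq> 0" using P by (auto simp: pivot_def)
      ultimately show "P \<in> F" using insert.prems(1) skip_less_Suc[of i n' j] i j n' by auto
    qed
    moreover have "card F < n'" using insert n' by simp
    ultimately obtain b i where b: "i < n'" "b i \<noteq> 0" "lincomb b (pivot ?t j z) n' = (\<lambda>_. 0)"
      using insert.IH by blast
    then show ?thesis using j n' lincomb_pivot[of j n' b ?t z] pivot_coeffs_nontrivial[of ?t j i n' b]
      by auto
  qed
qed

definition submodule :: "('a \<Rightarrow> int) set \<Rightarrow> bool" where
  "submodule B \<longleftrightarrow> (\<lambda>_. 0) \<in> B \<and> (\<forall>x\<in>B. \<forall>y\<in>B. \<forall>s t. (\<lambda>P. s * x P + t * y P) \<in> B)"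

lemma submodule_zero: "submodule B \<Longrightarrow> (\<lambda>_. 0) \<in> B"
  by (simp add: submodule_def)

lemma submodule_lin: "submodule B \<Longrightarrow> x \<in> B \<Longrightarrow> y \<in> B \<Longrightarrow> (\<lambda>P. s * x P + t * y P) \<in> B"
  by (simp add: submodule_def)

lemma submodule_scale: "submodule B \<Longrightarrow> x \<in> B \<Longrightarrow> (\<lambda>P. t * x P) \<in> B"
  using submodule_lin[of B x "\<lambda>_. 0" t 0] submodule_zero[of B] by simp

definition indep_mod :: "('a \<Rightarrow> int) set \<Rightarrow> ('a \<Rightarrow> int) set \<Rightarrow> (nat \<Rightarrow> 'a \<Rightarrow> int) \<Rightarrow> nat \<Rightarrow> bool" where
  "indep_mod Z B z n \<longleftrightarrow> (\<forall>i<n. z i \<in> Z) \<and> (\<forall>a. lincomb a z n \<in> B \<longrightarrow> (\<forall>i<n. a i = 0))"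

definition rank_mod :: "('a \<Rightarrow> int) set \<Rightarrow> ('a \<Rightarrow> int) set \<Rightarrow> nat" where
  "rank_mod Z B = Sup {n. \<exists>z. indep_mod Z B z n}"

definition finite_rank_mod :: "('a \<Rightarrow> int) set \<Rightarrow> ('a \<Rightarrow> int) set \<Rightarrow> bool" where
  "finite_rank_mod Z B \<longleftrightarrow> bdd_above {n. \<exists>z. indep_mod Z B z n}"

lemma rank_mod_ge: "finite_rank_mod Z B \<Longrightarrow> indep_mod Z B z n \<Longrightarrow> n \<le> rank_mod Z B"
  unfolding finite_rank_mod_def rank_mod_def by (rule cSup_upper) auto

lemma rank_mod_attained:
  assumes "finite_rank_mod Z B"
  obtains z where "indep_mod Z B z (rank_mod Z B)"
proof -
  let ?S = "{n. \<exists>z. indep_mod Z B z n}"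
  have "indep_mod Z B z 0" for z by (simp add: indep_mod_def)
  then have "?S \<noteq> {}" by blast
  moreover have "finite ?S" using assms by (simp add: finite_rank_mod_def bdd_above_nat)
  ultimately have "Max ?S \<in> ?S" by (rule Max_in[rotated])
  moreover have "rank_mod Z B = Max ?S" using \<open>?S \<noteq> {}\<close> unfolding rank_mod_def Sup_nat_def by (rule if_not_P)
  ultimately show thesis using that by auto
qed

lemma dependent_mod_if_rank_less:
  assumes "finite_rank_mod Z B" "rank_mod Z B < n" "\<forall>i<n. y i \<in> Z"
  obtains a where "lincomb a y n \<in> B" "\<exists>i<n. a i \<noteq> 0"
proof -
  have "\<not> indep_mod Z B y n" using rank_mod_ge[OF assms(1)] assms(2) by fastforce
  then show thesis using assms(3) that by (auto simp: indep_mod_def)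
qed

lemma indep_mod_antimono: "B \<subseteq> B' \<Longrightarrow> indep_mod Z B' z n \<Longrightarrow> indep_mod Z B z n"
  unfolding indep_mod_def by blast

lemma finite_rank_mod_antimono: "B \<subseteq> B' \<Longrightarrow> finite_rank_mod Z B \<Longrightarrow> finite_rank_mod Z B'"
  unfolding finite_rank_mod_def by (rule bdd_above_mono) (auto dest: indep_mod_antimono)

lemma finite_rank_mod_if_finite_support:
  assumes "finite F" "\<forall>y\<in>Z. \<forall>P. y P \<noteq> 0 \<longrightarrow> P \<in> F" "(\<lambda>_. 0) \<in> B"
  shows "finite_rank_mod Z B"
  unfolding finite_rank_mod_def bdd_above_def
proof (intro exI ballI)
  fix n assume "n \<in> {n. \<exists>z. indep_mod Z B z n}"
  then obtain z where z: "indep_mod Z B z n" by blast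
  show "n \<le> card F"
  proof (rule ccontr)
    assume "\<not> n \<le> card F"
    then obtain a where "\<exists>i<n. a i \<noteq> 0" "lincomb a z n = (\<lambda>_. 0)"
      using lincomb_dependent_if_card_less[OF assms(1), of n z] z assms(2) by (auto simp: indep_mod_def)
    then show False using z assms(3) by (auto simp: indep_mod_def)
  qed
qed

lemma indep_mod_extend:
  assumes z: "indep_mod Z B z n" and v: "v \<in> Z"
    and new: "\<And>a t. (\<lambda>P. lincomb a z n P + t * v P) \<in> B \<Longrightarrow> t = 0"
  shows "indep_mod Z B (z(n := v)) (Suc n)"
  unfolding indep_mod_def
proof (intro conjI allI impI)
  fix i assume "i < Suc n"
  then show "(z(n := v)) i \<in> Z" using z v by (auto simp: indep_mod_def less_Suc_eq)
next
  fix a i assume a: "lincomb a (z(n := v)) (Suc n) \<in> B" and i: "i < Suc n"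
  have an: "a n = 0" using new[of a "a n"] a by (simp add: lincomb_fun_upd)
  then have "lincomb a z n \<in> B" using a by (simp add: lincomb_fun_upd)
  then show "a i = 0" using z an i by (auto simp: indep_mod_def less_Suc_eq)
qed

lemma indep_mod_transfer:
  assumes z: "indep_mod Z' B z n" and y: "\<forall>i<k. y i \<in> Z"
    and comb: "\<And>b :: nat \<Rightarrow> int. \<exists>i<k. b i \<noteq> 0 \<Longrightarrow> \<exists>a. (\<exists>i<n. a i \<noteq> 0) \<and> lincomb b y k = lincomb a z n"
  shows "indep_mod Z B y k"
  unfolding indep_mod_def
proof (intro conjI allI impI)
  fix b i assume b: "lincomb b y k \<in> B" and i: "i < k"
  show "b i = 0"
  proof (rule ccontr)
    assume "b i \<noteq> 0"
    then obtain a where "\<exists>i<n. a i \<noteq> 0" "lincomb b y k = lincomb a z n" using comb i by blast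
    then show False using z b by (auto simp: indep_mod_def)
  qed
qed (use y in blast)

lemma indep_mod_mono: "Z \<subseteq> Z' \<Longrightarrow> indep_mod Z B z n \<Longrightarrow> indep_mod Z' B z n"
  unfolding indep_mod_def by blast

lemma Suc_rank_mod_le_if_new_coordinate:
  assumes fin: "finite_rank_mod Z B" "finite_rank_mod Z' B" and "Z \<subseteq> Z'" "w \<in> Z'"
    and new: "w Q \<noteq> 0" "\<forall>y\<in>Z. y Q = 0" "\<forall>b\<in>B. b Q = 0"
  shows "Suc (rank_mod Z B) \<le> rank_mod Z' B"
proof -
  obtain z where z: "indep_mod Z B z (rank_mod Z B)" using rank_mod_attained[OF fin(1)] .
  have "indep_mod Z' B (z(rank_mod Z B := w)) (Suc (rank_mod Z B))"
  proof (rule indep_mod_extend[OF indep_mod_mono[OF \<open>Z \<subseteq> Z'\<close> z] \<open>w \<in> Z'\<close>])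
    fix a t assume "(\<lambda>P. lincomb a z (rank_mod Z B) P + t * w P) \<in> B"
    moreover have "lincomb a z (rank_mod Z B) Q = 0"
      using z new(2) by (auto simp: indep_mod_def lincomb_def intro!: sum.neutral)
    ultimately show "t = 0" using new(1,3) by fastforce
  qed
  then show ?thesis by (rule rank_mod_ge[OF fin(2)])
qed

lemma pivot_eliminates:
  assumes "\<forall>i<Suc n. \<forall>P. m * z i P = y i P + t i * w P" "i < n" "j \<le> n"
  shows "pivot t j y i P = m * pivot t j z i P"
proof -
  have "y (skip j i) P = m * z (skip j i) P - t (skip j i) * w P" "y j P = m * z j P - t j * w P"
    using assms skip_less_Suc[OF assms(2,3)] by (metis add_diff_cancel_right' le_imp_less_Suc)+
  then have "pivot t j y i P = t j * (m * z (skip j i) P - t (skip j i) * w P)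
      - t (skip j i) * (m * z j P - t j * w P)"
    by (simp add: pivot_def)
  also have "\<dots> = m * pivot t j z i P" by (simp add: pivot_def algebra_simps)
  finally show ?thesis .
qed

lemma indep_mod_pivot:
  assumes z: "indep_mod Z' B z (Suc n)" and Z: "submodule Z" and m: "m \<noteq> 0"
    and j: "j \<le> n" "t j \<noteq> 0"
    and y: "\<forall>i<Suc n. y i \<in> Z \<and> (\<forall>P. m * z i P = y i P + t i * w P)"
  shows "indep_mod Z B (pivot t j y) n"
proof (rule indep_mod_transfer[OF z])
  show "\<forall>i<n. pivot t j y i \<in> Z"
  proof (intro allI impI)
    fix i assume "i < n"
    then have "y (skip j i) \<in> Z" "y j \<in> Z" using y j skip_less_Suc[of i n j] by auto
    from submodule_lin[OF Z this, of "t j" "- t (skip j i)"]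
    show "pivot t j y i \<in> Z" by (simp add: pivot_def)
  qed
next
  fix b :: "nat \<Rightarrow> int" assume "\<exists>i<n. b i \<noteq> 0"
  then obtain i where i: "i < n" "b i \<noteq> 0" by blast
  have piv: "pivot t j y i P = m * pivot t j z i P" if "i < n" for i P
    by (rule pivot_eliminates[OF _ that j(1), where w = w]) (use y in blast)
  have "lincomb b (pivot t j y) n P = lincomb (\<lambda>k. m * pivot_coeffs n t j b k) z (Suc n) P" for P
  proof -
    have "lincomb b (pivot t j y) n P = (\<Sum>i<n. m * (b i * pivot t j z i P))"
      unfolding lincomb_def by (rule sum.cong) (simp_all add: piv)
    also have "\<dots> = m * lincomb b (pivot t j z) n P" by (simp add: lincomb_def sum_distrib_left)
    also have "\<dots> = lincomb (\<lambda>k. m * pivot_coeffs n t j b k) z (Suc n) P"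
      by (simp only: lincomb_pivot[OF j(1)] lincomb_scale)
    finally show ?thesis .
  qed
  moreover obtain k where "k < Suc n" "pivot_coeffs n t j b k \<noteq> 0"
    using pivot_coeffs_nontrivial[of t j i n b] j i by blast
  ultimately show "\<exists>a. (\<exists>k<Suc n. a k \<noteq> 0) \<and> lincomb b (pivot t j y) n = lincomb a z (Suc n)"
    using m by (intro exI[of _ "\<lambda>k. m * pivot_coeffs n t j b k"]) auto
qed

lemma rank_mod_le_Suc_if_decomposition:
  assumes fin: "finite_rank_mod Z B" "finite_rank_mod Z' B" and Z: "submodule Z" and m: "m \<noteq> 0"
    and dec: "\<forall>x\<in>Z'. (\<lambda>P. m * x P - f x * w P) \<in> Z"
  shows "rank_mod Z' B \<le> Suc (rank_mod Z B)"
proof -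
  define r where "r = rank_mod Z' B"
  obtain z where z: "indep_mod Z' B z r" using rank_mod_attained[OF fin(2)] r_def by blast
  define t where "t i = f (z i)" for i
  define y where "y i = (\<lambda>P. m * z i P - t i * w P)" for i
  have y: "\<forall>i<r. y i \<in> Z \<and> (\<forall>P. m * z i P = y i P + t i * w P)"
    using z dec by (simp add: indep_mod_def y_def t_def)
  show ?thesis
  proof (cases "\<forall>i<r. t i = 0")
    case True
    have "indep_mod Z B y r"
    proof (rule indep_mod_transfer[OF z])
      fix b :: "nat \<Rightarrow> int" assume "\<exists>i<r. b i \<noteq> 0"
      moreover have "lincomb b y r = lincomb (\<lambda>i. m * b i) z r"
        using y True by (auto simp: fun_eq_iff lincomb_def intro!: sum.cong)
      ultimately show "\<exists>a. (\<exists>i<r. a i \<noteq> 0) \<and> lincomb b y r = lincomb a z r"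
        using m by (intro exI[of _ "\<lambda>i. m * b i"]) auto
    qed (use y in blast)
    then show ?thesis using rank_mod_ge[OF fin(1)] r_def by fastforce
  next
    case False
    then obtain j where j: "j < r" "t j \<noteq> 0" by auto
    then obtain n where n: "r = Suc n" by (cases r) auto
    have "indep_mod Z B (pivot t j y) n"
      using indep_mod_pivot[of Z' B z n Z m j t y w] z y j n Z m by simp
    then show ?thesis using rank_mod_ge[OF fin(1)] r_def n by fastforce
  qed
qed

definition adjoin :: "('a \<Rightarrow> int) set \<Rightarrow> ('a \<Rightarrow> int) \<Rightarrow> ('a \<Rightarrow> int) set" where
  "adjoin B v = {(\<lambda>P. b P + t * v P) | b t. b \<in> B}"

lemma subset_adjoin: "B \<subseteq> adjoin B v"
  unfolding adjoin_def by force

text \<open>The dependence S of z and v modulo B lets v replace the j-th vector, so the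
  remaining vectors stay independent modulo B + \<int>v.\<close>
lemma indep_mod_adjoin_skip:
  assumes B: "submodule B" and z: "indep_mod Z B z (Suc n)" and j: "j \<le> n" "a j \<noteq> 0"
    and s: "s \<noteq> 0" and S: "(\<lambda>P. lincomb a z (Suc n) P + s * v P) \<in> B"
  shows "indep_mod Z (adjoin B v) (\<lambda>i. z (skip j i)) n"
  unfolding indep_mod_def
proof (intro conjI allI impI)
  fix i assume "i < n"
  then show "z (skip j i) \<in> Z" using z j skip_less_Suc by (simp add: indep_mod_def)
next
  fix c i assume c: "lincomb c (\<lambda>i. z (skip j i)) n \<in> adjoin B v" and i: "i < n"
  then obtain b t where b: "b \<in> B" and bt: "lincomb c (\<lambda>i. z (skip j i)) n = (\<lambda>P. b P + t * v P)"
    unfolding adjoin_def by blast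
  define e where "e k = s * insert_at j 0 c k + t * a k" for k
  have "lincomb e z (Suc n) = (\<lambda>P. s * b P + t * (lincomb a z (Suc n) P + s * v P))"
  proof
    fix P
    have "lincomb (insert_at j 0 c) z (Suc n) P = b P + t * v P"
      using bt lincomb_insert_at[OF j(1), of 0 c z P] by simp
    then show "lincomb e z (Suc n) P = s * b P + t * (lincomb a z (Suc n) P + s * v P)"
      unfolding e_def lincomb_lin by (simp add: algebra_simps)
  qed
  then have "lincomb e z (Suc n) \<in> B" using submodule_lin[OF B b S, of s t] by simp
  then have e0: "\<forall>k<Suc n. e k = 0" using z by (simp add: indep_mod_def)
  then have "t = 0" using j e0[rule_format, of j] by (simp add: e_def)
  then show "c i = 0" using e0[rule_format, OF skip_less_Suc[OF i j(1)]] s by (simp add: e_def)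
qed

lemma Suc_rank_mod_adjoin_le:
  assumes fin: "finite_rank_mod Z B" and v: "v \<in> Z" "\<And>t. (\<lambda>P. t * v P) \<in> B \<Longrightarrow> t = 0"
  shows "Suc (rank_mod Z (adjoin B v)) \<le> rank_mod Z B"
proof -
  let ?r = "rank_mod Z (adjoin B v)"
  obtain z where z: "indep_mod Z (adjoin B v) z ?r"
    using rank_mod_attained[OF finite_rank_mod_antimono[OF subset_adjoin fin]] .
  have "indep_mod Z B (z(?r := v)) (Suc ?r)"
  proof (rule indep_mod_extend[OF indep_mod_antimono[OF subset_adjoin z] v(1)])
    fix a t assume S: "(\<lambda>P. lincomb a z ?r P + t * v P) \<in> B"
    then have "lincomb a z ?r \<in> adjoin B v"
      unfolding adjoin_def by (intro CollectI exI[of _ "- t"] exI conjI) auto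
    then have "lincomb a z ?r = (\<lambda>_. 0)" using z by (simp add: indep_mod_def lincomb_eq_zero)
    then show "t = 0" using S v(2) by simp
  qed
  then show ?thesis by (rule rank_mod_ge[OF fin])
qed

lemma rank_mod_le_Suc_rank_mod_adjoin:
  assumes B: "submodule B" and fin: "finite_rank_mod Z B"
    and v: "v \<in> Z" "\<And>t. (\<lambda>P. t * v P) \<in> B \<Longrightarrow> t = 0"
  shows "rank_mod Z B \<le> Suc (rank_mod Z (adjoin B v))"
proof (cases "rank_mod Z B")
  case (Suc n)
  obtain z where z: "indep_mod Z B z (Suc n)" using rank_mod_attained[OF fin] Suc by metis
  have zv: "\<forall>i<Suc (Suc n). (z(Suc n := v)) i \<in> Z" using z v(1) by (auto simp: indep_mod_def less_Suc_eq)
  obtain a where a': "lincomb a (z(Suc n := v)) (Suc (Suc n)) \<in> B"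
      and nz: "\<exists>i<Suc (Suc n). a i \<noteq> 0"
    by (rule dependent_mod_if_rank_less[OF fin _ zv]) (use Suc in simp)
  from a' have a: "(\<lambda>P. lincomb a z (Suc n) P + a (Suc n) * v P) \<in> B"
    by (simp only: lincomb_fun_upd)
  have an: "a (Suc n) \<noteq> 0"
    using z a nz by (auto simp: indep_mod_def less_Suc_eq)
  have "\<exists>j<Suc n. a j \<noteq> 0"
  proof (rule ccontr)
    assume "\<not> ?thesis"
    then have "(\<lambda>P. a (Suc n) * v P) \<in> B" using a by (simp add: lincomb_eq_zero)
    then show False using v(2) an by blast
  qed
  then obtain j where "j \<le> n" "a j \<noteq> 0" by (auto simp: less_Suc_eq_le)
  then have "indep_mod Z (adjoin B v) (\<lambda>i. z (skip j i)) n"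
    using indep_mod_adjoin_skip[OF B z _ _ an a] by blast
  then show ?thesis using rank_mod_ge[OF finite_rank_mod_antimono[OF subset_adjoin fin]] Suc by simp
qed simp

lemma rank_mod_adjoin_boundary:
  assumes "submodule B" "finite_rank_mod Z B" "v \<in> Z" "\<And>t. (\<lambda>P. t * v P) \<in> B \<Longrightarrow> t = 0"
  shows "Suc (rank_mod Z (adjoin B v)) = rank_mod Z B"
  using Suc_rank_mod_adjoin_le[of Z B v] rank_mod_le_Suc_rank_mod_adjoin[of B Z v] assms
  by (simp add: antisym)

lemma rank_mod_adjoin_torsion:
  assumes B: "submodule B" and m: "m \<noteq> 0" "(\<lambda>P. m * v P) \<in> B"
  shows "rank_mod Z (adjoin B v) = rank_mod Z B"
proof -
  have "indep_mod Z (adjoin B v) z n" if indep: "indep_mod Z B z n" for z n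
    unfolding indep_mod_def
  proof (intro conjI allI impI)
    fix a i assume a: "lincomb a z n \<in> adjoin B v" and i: "i < n"
    obtain b t where b: "b \<in> B" and bt: "lincomb a z n = (\<lambda>P. b P + t * v P)"
      using a unfolding adjoin_def by blast
    have "lincomb (\<lambda>k. m * a k) z n = (\<lambda>P. m * b P + t * (m * v P))"
      using bt by (simp add: fun_eq_iff lincomb_scale algebra_simps)
    then have "lincomb (\<lambda>k. m * a k) z n \<in> B" using submodule_lin[OF B b m(2)] by simp
    then show "a i = 0" using indep i m(1) unfolding indep_mod_def by fastforce
  qed (use indep in \<open>simp add: indep_mod_def\<close>)
  then have "indep_mod Z (adjoin B v) = indep_mod Z B"
    using indep_mod_antimono[OF subset_adjoin] by (intro ext) blast
  then show ?thesis by (simp add: rank_mod_def)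
qed

section \<open>Cubical chains on sets of cubes\<close>

definition chain_supp :: "('a \<Rightarrow> int) \<Rightarrow> 'a set" where
  "chain_supp c = {Q. c Q \<noteq> 0}"

definition chains_on :: "ecube set \<Rightarrow> nat \<Rightarrow> (ecube \<Rightarrow> int) set" where
  "chains_on C k = {c. finite (chain_supp c) \<and> (\<forall>Q. c Q \<noteq> 0 \<longrightarrow> Q \<in> C \<and> cube_dim Q = k)}"

definition cycles_on :: "ecube set \<Rightarrow> nat \<Rightarrow> (ecube \<Rightarrow> int) set" where
  "cycles_on C k = {c \<in> chains_on C k. chain_bd c = (\<lambda>_. 0)}"

definition boundaries_on :: "ecube set \<Rightarrow> nat \<Rightarrow> (ecube \<Rightarrow> int) set" where
  "boundaries_on C k = chain_bd ` chains_on C (Suc k)"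

definition betti_on :: "ecube set \<Rightarrow> nat \<Rightarrow> nat" where
  "betti_on C k = rank_mod (cycles_on C k) (boundaries_on C k)"

definition cubes_in :: "nat \<Rightarrow> real list set \<Rightarrow> ecube set" where
  "cubes_in d S = {Q. length Q = d \<and> realize Q \<subseteq> S}"

definition face_closed :: "ecube set \<Rightarrow> bool" where
  "face_closed C \<longleftrightarrow> (\<forall>R\<in>C. \<forall>P. cube_bd R P \<noteq> 0 \<longrightarrow> P \<in> C)"

definition cube_chain :: "ecube \<Rightarrow> ecube \<Rightarrow> int" where
  "cube_chain Q = (\<lambda>R. if R = Q then 1 else 0)"

lemma betti_eq_betti_on: "betti d k S = betti_on (cubes_in d S) k"
proof -
  have ch: "chains d j S = chains_on (cubes_in d S) j" for j
    by (auto simp: chains_def chains_on_def cubes_in_def chain_supp_def)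
  then have "cycles d k S = cycles_on (cubes_in d S) k" "boundaries d k S = boundaries_on (cubes_in d S) k"
    by (simp_all add: cycles_def cycles_on_def boundaries_def boundaries_on_def)
  then show ?thesis by (simp add: betti_def betti_on_def rank_mod_def indep_mod_def lincomb_def)
qed

lemma chain_bd_eq_sum:
  assumes "finite F" "chain_supp c \<subseteq> F"
  shows "chain_bd c P = (\<Sum>Q\<in>F. c Q * cube_bd Q P)"
  unfolding chain_bd_def
  by (rule sum.mono_neutral_left) (use assms in \<open>auto simp: chain_supp_def\<close>)

lemma chain_bd_lin:
  assumes "finite (chain_supp c1)" "finite (chain_supp c2)"
  shows "chain_bd (\<lambda>Q. s * c1 Q + t * c2 Q) P = s * chain_bd c1 P + t * chain_bd c2 P"
proof -
  let ?F = "chain_supp c1 \<union> chain_supp c2"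
  have F: "finite ?F" using assms by simp
  have "chain_bd (\<lambda>Q. s * c1 Q + t * c2 Q) P = (\<Sum>Q\<in>?F. (s * c1 Q + t * c2 Q) * cube_bd Q P)"
    by (rule chain_bd_eq_sum[OF F]) (auto simp: chain_supp_def)
  also have "\<dots> = s * (\<Sum>Q\<in>?F. c1 Q * cube_bd Q P) + t * (\<Sum>Q\<in>?F. c2 Q * cube_bd Q P)"
    by (simp add: algebra_simps sum.distrib sum_distrib_left)
  also have "\<dots> = s * chain_bd c1 P + t * chain_bd c2 P"
    using chain_bd_eq_sum[OF F, of c1] chain_bd_eq_sum[OF F, of c2] by auto
  finally show ?thesis .
qed

lemma chain_bd_diff:
  assumes "finite (chain_supp c1)" "finite (chain_supp c2)"
  shows "chain_bd (\<lambda>Q. c1 Q - c2 Q) P = chain_bd c1 P - chain_bd c2 P"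
  using chain_bd_lin[OF assms, of 1 "-1" P] by simp

lemma chain_bd_zero: "chain_bd (\<lambda>_. 0) = (\<lambda>_. 0)"
  by (simp add: chain_bd_def fun_eq_iff)

lemma chain_supp_cube_chain: "chain_supp (cube_chain Q) = {Q}"
  by (auto simp: chain_supp_def cube_chain_def)

lemma chain_bd_cube_chain: "chain_bd (cube_chain Q) = cube_bd Q"
proof
  fix P
  have "chain_bd (cube_chain Q) P = (\<Sum>R\<in>{Q}. cube_chain Q R * cube_bd R P)"
    by (rule chain_bd_eq_sum) (auto simp: chain_supp_cube_chain)
  then show "chain_bd (cube_chain Q) P = cube_bd Q P" by (simp add: cube_chain_def)
qed

lemma cube_bd_nonzeroD:
  assumes "cube_bd R P \<noteq> 0"
  obtains i where "i < length R" "snd (R!i)" "P = face_plus R i \<or> P = face_minus R i"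
proof -
  obtain j where j: "j < length (nondeg R)"
    "(-1) ^ j * ((if P = face_plus R (nondeg R ! j) then 1 else 0)
                - (if P = face_minus R (nondeg R ! j) then 1 else 0)) \<noteq> (0::int)"
    using sum.not_neutral_contains_not_neutral assms unfolding cube_bd_def by blast
  have "nondeg R ! j \<in> set (nondeg R)" using j(1) by simp
  then have "nondeg R ! j < length R" "snd (R ! (nondeg R ! j))" by (auto simp: nondeg_def)
  moreover have "P = face_plus R (nondeg R ! j) \<or> P = face_minus R (nondeg R ! j)"
    using j(2) by (auto split: if_splits)
  ultimately show thesis using that by blast
qed

lemma finite_chain_supp_cube_bd: "finite (chain_supp (cube_bd R))"
proof -
  have "chain_supp (cube_bd R) \<subseteq> face_plus R ` {..<length R} \<union> face_minus R ` {..<length R}"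
    by (auto simp: chain_supp_def elim!: cube_bd_nonzeroD)
  then show ?thesis by (rule finite_subset) simp
qed

lemma cube_dim_face:
  assumes "i < length R" "snd (R!i)"
  shows "Suc (cube_dim (R[i := (x, False)])) = cube_dim R"
proof -
  let ?I = "{j. j < length R \<and> snd (R!j)}"
  have "cube_dim R = card ?I"
    by (simp add: cube_dim_def length_filter_conv_card)
  moreover have "cube_dim (R[i := (x, False)]) = card (?I - {i})"
    unfolding cube_dim_def length_filter_conv_card
    by (rule arg_cong[where f=card]) (use assms in \<open>auto simp: nth_list_update split: if_splits\<close>)
  moreover have "card ?I > 0" using assms by (auto simp: card_gt_0_iff)
  moreover have "i \<in> ?I" using assms by simp
  ultimately show ?thesis by (simp add: card_Diff_singleton)
qed

lemma
  assumes "cube_bd R P \<noteq> 0"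
  shows cube_dim_bd_nonzero: "Suc (cube_dim P) = cube_dim R"
    and length_bd_nonzero: "length P = length R"
  using assms by (auto simp: face_plus_def face_minus_def cube_dim_face elim!: cube_bd_nonzeroD)

lemma realize_bd_nonzero:
  assumes "cube_bd R P \<noteq> 0"
  shows "realize P \<subseteq> realize R"
proof
  fix y assume y: "y \<in> realize P"
  obtain i where i: "i < length R" "snd (R!i)" "P = face_plus R i \<or> P = face_minus R i"
    using assms by (rule cube_bd_nonzeroD)
  have len: "length P = length R" using i by (auto simp: face_plus_def face_minus_def)
  have "real_of_int (fst (R!k)) \<le> y!k \<and> y!k \<le> real_of_int (fst (R!k)) + (if snd (R!k) then 1 else 0)"
    if "k < length R" for k
  proof (cases "k = i")
    case True
    then show ?thesis using y i that by (auto simp: realize_def face_plus_def face_minus_def)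
  next
    case False
    then have "P!k = R!k" using i by (auto simp: face_plus_def face_minus_def)
    moreover have "real_of_int (fst (P!k)) \<le> y!k \<and> y!k \<le> real_of_int (fst (P!k)) + (if snd (P!k) then 1 else 0)"
      using y that len by (simp add: realize_def)
    ultimately show ?thesis by simp
  qed
  then show "y \<in> realize R" using y len by (simp add: realize_def)
qed

lemma face_closed_cubes_in: "face_closed (cubes_in d S)"
  unfolding face_closed_def cubes_in_def using realize_bd_nonzero length_bd_nonzero by blast

lemma chains_on_finite_supp: "c \<in> chains_on C k \<Longrightarrow> finite (chain_supp c)"
  by (simp add: chains_on_def)

lemma submodule_chains_on: "submodule (chains_on C k)"
  unfolding submodule_def
proof (intro conjI ballI allI)
  fix x y and s t :: int assume "x \<in> chains_on C k" "y \<in> chains_on C k"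
  moreover have nz: "x Q \<noteq> 0 \<or> y Q \<noteq> 0" if "s * x Q + t * y Q \<noteq> 0" for Q
    using that by auto
  then have "chain_supp (\<lambda>P. s * x P + t * y P) \<subseteq> chain_supp x \<union> chain_supp y"
    by (auto simp: chain_supp_def)
  ultimately show "(\<lambda>P. s * x P + t * y P) \<in> chains_on C k"
    unfolding chains_on_def by (auto intro: finite_subset dest!: nz)
qed (simp add: chains_on_def chain_supp_def)

lemma submodule_cycles_on: "submodule (cycles_on C k)"
  unfolding submodule_def cycles_on_def
  using submodule_zero[OF submodule_chains_on] submodule_lin[OF submodule_chains_on]
  by (auto simp: chain_bd_zero chain_bd_lin chains_on_finite_supp fun_eq_iff)

lemma submodule_boundaries_on: "submodule (boundaries_on C k)"
  unfolding submodule_def boundaries_on_def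
proof (intro conjI ballI allI)
  show "(\<lambda>_. 0) \<in> chain_bd ` chains_on C (Suc k)"
    using submodule_zero[OF submodule_chains_on] chain_bd_zero by (metis image_eqI)
next
  fix x y and s t :: int
  assume "x \<in> chain_bd ` chains_on C (Suc k)" "y \<in> chain_bd ` chains_on C (Suc k)"
  then obtain cx cy where c: "cx \<in> chains_on C (Suc k)" "cy \<in> chains_on C (Suc k)"
    and xy: "x = chain_bd cx" "y = chain_bd cy" by blast
  have "(\<lambda>P. s * x P + t * y P) = chain_bd (\<lambda>Q. s * cx Q + t * cy Q)"
    using chain_bd_lin[OF chains_on_finite_supp[OF c(1)] chains_on_finite_supp[OF c(2)]] xy by auto
  then show "(\<lambda>P. s * x P + t * y P) \<in> chain_bd ` chains_on C (Suc k)"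
    using submodule_lin[OF submodule_chains_on c] by auto
qed

lemma chain_bd_mem_chains_on:
  assumes "face_closed C" "c \<in> chains_on C (Suc k)"
  shows "chain_bd c \<in> chains_on C k"
proof -
  have nz: "\<exists>Q. c Q \<noteq> 0 \<and> cube_bd Q P \<noteq> 0" if "chain_bd c P \<noteq> 0" for P
    using sum.not_neutral_contains_not_neutral[OF that[unfolded chain_bd_def]] by auto
  have "chain_supp (chain_bd c) \<subseteq> (\<Union>Q\<in>chain_supp c. chain_supp (cube_bd Q))"
    by (auto simp: chain_supp_def dest: nz)
  then have "finite (chain_supp (chain_bd c))"
    by (rule finite_subset) (use chains_on_finite_supp[OF assms(2)] finite_chain_supp_cube_bd in auto)
  moreover have "P \<in> C \<and> cube_dim P = k" if P: "chain_bd c P \<noteq> 0" for P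
  proof -
    obtain Q where Q: "c Q \<noteq> 0" "cube_bd Q P \<noteq> 0" using nz[OF P] by blast
    then have "Q \<in> C" "cube_dim Q = Suc k" using assms(2) by (auto simp: chains_on_def)
    then show ?thesis using Q assms(1) cube_dim_bd_nonzero[OF Q(2)] by (auto simp: face_closed_def)
  qed
  ultimately show ?thesis by (simp add: chains_on_def)
qed

lemma finite_rank_mod_cycles_on:
  assumes "finite C" "(\<lambda>_. 0) \<in> B"
  shows "finite_rank_mod (cycles_on C k) B"
  by (rule finite_rank_mod_if_finite_support[OF assms(1) _ assms(2)])
    (auto simp: cycles_on_def chains_on_def)

section \<open>The boundary of a boundary\<close>

text \<open>The product of the elementary interval a with a chain c.\<close>
definition cons_chain :: "int \<times> bool \<Rightarrow> (ecube \<Rightarrow> int) \<Rightarrow> ecube \<Rightarrow> int" where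
  "cons_chain a c = (\<lambda>P. case P of [] \<Rightarrow> 0 | b # P' \<Rightarrow> if b = a then c P' else 0)"

lemma cons_chain_Cons [simp]: "cons_chain a c (b # P) = (if b = a then c P else 0)"
  by (simp add: cons_chain_def)

lemma cons_chain_Nil [simp]: "cons_chain a c [] = 0"
  by (simp add: cons_chain_def)

lemma cons_chain_zero [simp]: "cons_chain a (\<lambda>_. 0) = (\<lambda>_. 0)"
  by (simp add: fun_eq_iff cons_chain_def split: list.split)

lemma nondeg_Cons: "nondeg (a # Q) = (if snd a then 0 # map Suc (nondeg Q) else map Suc (nondeg Q))"
proof -
  have "[0..<Suc (length Q)] = 0 # map Suc [0..<length Q]"
    by (subst upt_conv_Cons) (simp_all add: map_Suc_upt del: upt_Suc)
  then show ?thesis by (simp add: nondeg_def filter_map o_def)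
qed

lemma cons_chain_cube_bd: "cons_chain a (cube_bd Q) P = (\<Sum>j<length (nondeg Q). (-1)^j *
   ((if P = a # face_plus Q (nondeg Q ! j) then 1 else 0) - (if P = a # face_minus Q (nondeg Q ! j) then 1 else 0)))"
  by (cases P) (auto simp: cube_bd_def)

lemma cube_bd_Cons_degenerate:
  assumes "\<not> snd a"
  shows "cube_bd (a # Q) = cons_chain a (cube_bd Q)"
proof
  fix P
  show "cube_bd (a # Q) P = cons_chain a (cube_bd Q) P"
    unfolding cube_bd_def cons_chain_cube_bd nondeg_Cons using assms
    by (simp add: face_plus_def face_minus_def)
qed

lemma cube_bd_Cons_nondegenerate:
  assumes "snd a"
  shows "cube_bd (a # Q) P = cube_chain ((fst a + 1, False) # Q) P - cube_chain ((fst a, False) # Q) P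
    - cons_chain a (cube_bd Q) P"
proof -
  let ?g = "\<lambda>j. (-1::int)^j * ((if P = face_plus (a # Q) ((0 # map Suc (nondeg Q)) ! j) then 1 else 0)
               - (if P = face_minus (a # Q) ((0 # map Suc (nondeg Q)) ! j) then 1 else 0))"
  have "cube_bd (a # Q) P = ?g 0 + (\<Sum>j<length (nondeg Q). ?g (Suc j))"
    unfolding cube_bd_def nondeg_Cons using assms by (simp add: sum.lessThan_Suc_shift del: sum.lessThan_Suc)
  also have "?g 0 = cube_chain ((fst a + 1, False) # Q) P - cube_chain ((fst a, False) # Q) P"
    by (simp add: face_plus_def face_minus_def cube_chain_def)
  also have "(\<Sum>j<length (nondeg Q). ?g (Suc j)) = - cons_chain a (cube_bd Q) P"
    unfolding cons_chain_cube_bd sum_negf[symmetric]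
    by (rule sum.cong) (simp_all add: face_plus_def face_minus_def)
  finally show ?thesis by simp
qed

lemma chain_supp_cons_chain: "chain_supp (cons_chain a c) = (#) a ` chain_supp c"
proof
  show "chain_supp (cons_chain a c) \<subseteq> (#) a ` chain_supp c"
  proof
    fix P assume "P \<in> chain_supp (cons_chain a c)"
    then show "P \<in> (#) a ` chain_supp c"
      by (cases P) (auto simp: chain_supp_def split: if_splits)
  qed
qed (auto simp: chain_supp_def)

lemma chain_bd_cons_chain_eq_sum:
  assumes "finite (chain_supp c)"
  shows "chain_bd (cons_chain a c) P = (\<Sum>R\<in>chain_supp c. c R * cube_bd (a # R) P)"
proof -
  have "chain_bd (cons_chain a c) P = (\<Sum>Q\<in>(#) a ` chain_supp c. cons_chain a c Q * cube_bd Q P)"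
    by (rule chain_bd_eq_sum) (use assms in \<open>auto simp: chain_supp_cons_chain\<close>)
  also have "\<dots> = (\<Sum>R\<in>chain_supp c. c R * cube_bd (a # R) P)"
    by (subst sum.reindex) (auto simp: inj_on_def)
  finally show ?thesis .
qed

lemma cons_chain_chain_bd_eq_sum:
  assumes "finite (chain_supp c)"
  shows "cons_chain a (chain_bd c) P = (\<Sum>R\<in>chain_supp c. c R * cons_chain a (cube_bd R) P)"
  using chain_bd_eq_sum[OF assms subset_refl] by (cases P) auto

lemma sum_cube_chain_Cons:
  assumes "finite (chain_supp c)"
  shows "(\<Sum>R\<in>chain_supp c. c R * cube_chain (b # R) P) = cons_chain b c P"
proof (cases P)
  case (Cons b' P')
  have "(\<Sum>R\<in>chain_supp c. c R * cube_chain (b # R) P) = (\<Sum>R\<in>chain_supp c. if R = P' \<and> b' = b then c R else 0)"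
    by (rule sum.cong) (auto simp: cube_chain_def Cons)
  also have "\<dots> = cons_chain b c P" using assms by (simp add: Cons chain_supp_def)
  finally show ?thesis .
qed (simp add: cube_chain_def)

lemma chain_bd_cons_chain_degenerate:
  assumes "finite (chain_supp c)" "\<not> snd a"
  shows "chain_bd (cons_chain a c) = cons_chain a (chain_bd c)"
  using cube_bd_Cons_degenerate[OF assms(2)]
  by (simp add: fun_eq_iff chain_bd_cons_chain_eq_sum[OF assms(1)] cons_chain_chain_bd_eq_sum[OF assms(1)])

lemma chain_bd_cons_chain_nondegenerate:
  assumes "finite (chain_supp c)" "snd a"
  shows "chain_bd (cons_chain a c) P
    = cons_chain (fst a + 1, False) c P - cons_chain (fst a, False) c P - cons_chain a (chain_bd c) P"
proof -
  have "chain_bd (cons_chain a c) P = (\<Sum>R\<in>chain_supp c. c R * cube_chain ((fst a + 1, False) # R) P)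
      - (\<Sum>R\<in>chain_supp c. c R * cube_chain ((fst a, False) # R) P)
      - (\<Sum>R\<in>chain_supp c. c R * cons_chain a (cube_bd R) P)"
    unfolding chain_bd_cons_chain_eq_sum[OF assms(1)] cube_bd_Cons_nondegenerate[OF assms(2)]
    by (simp add: right_diff_distrib sum_subtractf)
  then show ?thesis by (simp only: sum_cube_chain_Cons[OF assms(1)] cons_chain_chain_bd_eq_sum[OF assms(1)])
qed

lemma chain_bd_cube_bd: "chain_bd (cube_bd Q) = (\<lambda>_. 0)"
proof (induction Q)
  case Nil
  have "cube_bd [] = (\<lambda>_. 0)" by (simp add: fun_eq_iff cube_bd_def nondeg_def)
  then show ?case by (simp add: chain_bd_zero)
next
  case (Cons a Q)
  have fin: "finite (chain_supp (cube_bd Q))" by (rule finite_chain_supp_cube_bd)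
  show ?case
  proof (cases "snd a")
    case False
    then show ?thesis
      using chain_bd_cons_chain_degenerate[OF fin False] Cons.IH
      by (simp add: cube_bd_Cons_degenerate fun_eq_iff)
  next
    case True
    define Q1 where "Q1 = (fst a + 1, False) # Q"
    define Q0 where "Q0 = (fst a, False) # Q"
    have fin_cons: "finite (chain_supp (cons_chain a (cube_bd Q)))"
      using fin by (simp add: chain_supp_cons_chain)
    have fin_cube: "finite (chain_supp (cube_chain R))" for R by (simp add: chain_supp_cube_chain)
    have fin_cubes: "finite (chain_supp (\<lambda>R. cube_chain Q1 R - cube_chain Q0 R))"
      by (rule finite_subset[of _ "{Q1, Q0}"]) (auto simp: chain_supp_def cube_chain_def)
    have "cube_bd (a # Q) = (\<lambda>R. (cube_chain Q1 R - cube_chain Q0 R) - cons_chain a (cube_bd Q) R)"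
      using cube_bd_Cons_nondegenerate[OF True] by (simp add: fun_eq_iff Q1_def Q0_def)
    then have "chain_bd (cube_bd (a # Q)) P
        = cube_bd Q1 P - cube_bd Q0 P - chain_bd (cons_chain a (cube_bd Q)) P" for P
      by (simp only: chain_bd_diff[OF fin_cubes fin_cons] chain_bd_diff[OF fin_cube fin_cube]
          chain_bd_cube_chain)
    also have "\<dots> P = 0" for P
      unfolding chain_bd_cons_chain_nondegenerate[OF fin True] Cons.IH Q1_def Q0_def
      by (simp add: cube_bd_Cons_degenerate)
    finally show ?thesis by (simp add: fun_eq_iff)
  qed
qed

section \<open>Adding one cube\<close>

lemma chains_on_mono: "C \<subseteq> C' \<Longrightarrow> chains_on C k \<subseteq> chains_on C' k"
  by (auto simp: chains_on_def)

lemma chains_on_insert_other: "cube_dim Q \<noteq> k \<Longrightarrow> chains_on (insert Q C) k = chains_on C k"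
  by (auto simp: chains_on_def)

lemma chain_bd_add_cube:
  assumes "finite (chain_supp c)"
  shows "chain_bd (\<lambda>R. c R + t * cube_chain Q R) P = chain_bd c P + t * cube_bd Q P"
  using chain_bd_lin[OF assms, of "cube_chain Q" 1 t P]
  by (simp add: chain_supp_cube_chain chain_bd_cube_chain)

lemma add_cube_mem_chains_on:
  assumes "y \<in> chains_on C k" "cube_dim Q = k"
  shows "(\<lambda>R. y R + t * cube_chain Q R) \<in> chains_on (insert Q C) k"
proof -
  have "chain_supp (\<lambda>R. y R + t * cube_chain Q R) \<subseteq> insert Q (chain_supp y)"
    by (auto simp: chain_supp_def cube_chain_def)
  moreover have "R \<in> insert Q C \<and> cube_dim R = k" if "y R + t * cube_chain Q R \<noteq> 0" for R
    using that assms by (cases "R = Q") (auto simp: chains_on_def cube_chain_def)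
  ultimately show ?thesis
    using chains_on_finite_supp[OF assms(1)] by (auto simp: chains_on_def intro: finite_subset)
qed

lemma fun_upd_zero_mem_chains_on:
  "e \<in> chains_on (insert Q C) k \<Longrightarrow> Q \<notin> C \<Longrightarrow> e(Q := 0) \<in> chains_on C k"
  by (auto simp: chains_on_def chain_supp_def intro: finite_subset)

lemma chain_bd_fun_upd_zero:
  assumes "finite (chain_supp e)"
  shows "chain_bd e P = chain_bd (e(Q := 0)) P + e Q * cube_bd Q P"
proof -
  have "e = (\<lambda>R. (e(Q := 0)) R + e Q * cube_chain Q R)" by (simp add: fun_eq_iff cube_chain_def)
  moreover have "finite (chain_supp (e(Q := 0)))"
    by (rule finite_subset[OF _ assms]) (auto simp: chain_supp_def)
  ultimately show ?thesis using chain_bd_add_cube[of "e(Q := 0)" "e Q" Q P] by simp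
qed

lemma boundaries_on_insert:
  assumes "Q \<notin> C" "cube_dim Q = Suc q"
  shows "boundaries_on (insert Q C) q = adjoin (boundaries_on C q) (cube_bd Q)"
proof
  show "boundaries_on (insert Q C) q \<subseteq> adjoin (boundaries_on C q) (cube_bd Q)"
  proof
    fix x assume "x \<in> boundaries_on (insert Q C) q"
    then obtain e where e: "e \<in> chains_on (insert Q C) (Suc q)" "x = chain_bd e"
      by (auto simp: boundaries_on_def)
    then have "x = (\<lambda>P. chain_bd (e(Q := 0)) P + e Q * cube_bd Q P)"
      using chain_bd_fun_upd_zero[OF chains_on_finite_supp[OF e(1)]] by auto
    moreover have "chain_bd (e(Q := 0)) \<in> boundaries_on C q"
      using fun_upd_zero_mem_chains_on[OF e(1) assms(1)] by (simp add: boundaries_on_def)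
    ultimately show "x \<in> adjoin (boundaries_on C q) (cube_bd Q)" unfolding adjoin_def by blast
  qed
next
  show "adjoin (boundaries_on C q) (cube_bd Q) \<subseteq> boundaries_on (insert Q C) q"
  proof
    fix x assume "x \<in> adjoin (boundaries_on C q) (cube_bd Q)"
    then obtain y t where y: "y \<in> chains_on C (Suc q)" "x = (\<lambda>P. chain_bd y P + t * cube_bd Q P)"
      by (auto simp: adjoin_def boundaries_on_def)
    then have "x = chain_bd (\<lambda>R. y R + t * cube_chain Q R)"
      using chain_bd_add_cube[OF chains_on_finite_supp[OF y(1)]] by auto
    then show "x \<in> boundaries_on (insert Q C) q"
      using add_cube_mem_chains_on[OF y(1) assms(2)] by (auto simp: boundaries_on_def)
  qed
qed

lemma boundaries_on_vanish:
  assumes "face_closed C" "Q \<notin> C" "y \<in> boundaries_on C k"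
  shows "y Q = 0"
proof -
  obtain c where "c \<in> chains_on C (Suc k)" "y = chain_bd c"
    using assms(3) by (auto simp: boundaries_on_def)
  then have "y \<in> chains_on C k" using chain_bd_mem_chains_on[OF assms(1)] by simp
  then show ?thesis using assms(2) by (auto simp: chains_on_def)
qed

lemma betti_on_insert_other:
  assumes "cube_dim Q \<noteq> q" "cube_dim Q \<noteq> Suc q"
  shows "betti_on (insert Q C) q = betti_on C q"
  using assms by (simp add: betti_on_def cycles_on_def boundaries_on_def chains_on_insert_other)

text \<open>The class of the boundary of Q has finite order in the homology of C.\<close>
definition bd_bounds_rationally :: "ecube set \<Rightarrow> ecube \<Rightarrow> bool" where
  "bd_bounds_rationally C Q \<longleftrightarrow>
     (\<exists>m c. m \<noteq> 0 \<and> c \<in> chains_on C (cube_dim Q) \<and> chain_bd c = (\<lambda>P. m * cube_bd Q P))"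

lemma bounding_chain_mem_cycles_on:
  assumes "c \<in> chains_on C (cube_dim Q)" "chain_bd c = (\<lambda>P. m * cube_bd Q P)"
  shows "(\<lambda>R. m * cube_chain Q R - c R) \<in> cycles_on (insert Q C) (cube_dim Q)"
proof -
  let ?w = "\<lambda>R. (-1) * c R + m * cube_chain Q R"
  have "(\<lambda>R. (-1) * c R) \<in> chains_on C (cube_dim Q)"
    by (rule submodule_scale[OF submodule_chains_on assms(1)])
  from add_cube_mem_chains_on[OF this refl, of m]
  have w: "?w \<in> chains_on (insert Q C) (cube_dim Q)" .
  have bd: "chain_bd ?w P = 0" for P
    using chain_bd_lin[OF chains_on_finite_supp[OF assms(1)], of "cube_chain Q" "-1" m P] assms(2)
    by (simp add: chain_supp_cube_chain chain_bd_cube_chain)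
  have "(\<lambda>R. m * cube_chain Q R - c R) = ?w" by (simp add: fun_eq_iff)
  then show ?thesis using w bd by (simp only: cycles_on_def mem_Collect_eq fun_eq_iff) blast
qed

lemma cycles_on_insert_decompose:
  assumes Q: "Q \<notin> C" and c: "c \<in> chains_on C (cube_dim Q)" "chain_bd c = (\<lambda>P. m * cube_bd Q P)"
    and x: "x \<in> cycles_on (insert Q C) (cube_dim Q)"
  shows "(\<lambda>P. m * x P - x Q * (m * cube_chain Q P - c P)) \<in> cycles_on C (cube_dim Q)"
proof -
  have xc: "x \<in> chains_on (insert Q C) (cube_dim Q)" and xb: "chain_bd x = (\<lambda>_. 0)"
    using x by (auto simp: cycles_on_def)
  have x0: "x(Q := 0) \<in> chains_on C (cube_dim Q)" by (rule fun_upd_zero_mem_chains_on[OF xc Q])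
  let ?y = "\<lambda>P. m * (x(Q := 0)) P + x Q * c P"
  have eq: "(\<lambda>P. m * x P - x Q * (m * cube_chain Q P - c P)) = ?y"
    by (simp add: fun_eq_iff cube_chain_def algebra_simps)
  have "chain_bd ?y R = m * (chain_bd (x(Q := 0)) R + x Q * cube_bd Q R)" for R
    using chain_bd_lin[OF chains_on_finite_supp[OF x0] chains_on_finite_supp[OF c(1)], of m "x Q" R] c(2)
    by (simp add: algebra_simps)
  moreover have "chain_bd (x(Q := 0)) R + x Q * cube_bd Q R = 0" for R
    using chain_bd_fun_upd_zero[OF chains_on_finite_supp[OF xc], of R Q] xb by simp
  ultimately have "chain_bd ?y = (\<lambda>_. 0)" by (simp add: fun_eq_iff)
  then show ?thesis
    unfolding eq using submodule_lin[OF submodule_chains_on x0 c(1)] by (simp add: cycles_on_def)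
qed

lemma betti_on_insert_bounding_top:
  assumes C: "face_closed C" "finite C" "Q \<notin> C" and Q: "bd_bounds_rationally C Q"
  shows "betti_on (insert Q C) (cube_dim Q) = Suc (betti_on C (cube_dim Q))"
proof -
  define k where "k = cube_dim Q"
  obtain m c where m: "m \<noteq> 0" and c: "c \<in> chains_on C k" "chain_bd c = (\<lambda>P. m * cube_bd Q P)"
    using Q by (auto simp: bd_bounds_rationally_def k_def)
  let ?w = "\<lambda>R. m * cube_chain Q R - c R"
  let ?B = "boundaries_on C k"
  have B: "boundaries_on (insert Q C) k = ?B"
    by (simp add: boundaries_on_def chains_on_insert_other k_def)
  have zero: "(\<lambda>_. 0) \<in> ?B" by (rule submodule_zero[OF submodule_boundaries_on])
  have fin: "finite_rank_mod (cycles_on C k) ?B" "finite_rank_mod (cycles_on (insert Q C) k) ?B"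
    using finite_rank_mod_cycles_on zero C(2) by auto
  have sub: "cycles_on C k \<subseteq> cycles_on (insert Q C) k"
    using chains_on_mono[of C "insert Q C" k] by (auto simp: cycles_on_def)
  have cQ: "c Q = 0" using c C(3) by (auto simp: chains_on_def)
  have "Suc (rank_mod (cycles_on C k) ?B) \<le> rank_mod (cycles_on (insert Q C) k) ?B"
  proof (rule Suc_rank_mod_le_if_new_coordinate[OF fin sub])
    show "?w \<in> cycles_on (insert Q C) k" using bounding_chain_mem_cycles_on c by (simp add: k_def)
    show "?w Q \<noteq> 0" using m cQ by (simp add: cube_chain_def)
    show "\<forall>y\<in>cycles_on C k. y Q = 0" using C(3) by (auto simp: cycles_on_def chains_on_def)
    show "\<forall>b\<in>?B. b Q = 0" using boundaries_on_vanish[OF C(1,3)] by blast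
  qed
  moreover have "rank_mod (cycles_on (insert Q C) k) ?B \<le> Suc (rank_mod (cycles_on C k) ?B)"
    by (rule rank_mod_le_Suc_if_decomposition[OF fin submodule_cycles_on m, where f = "\<lambda>x. x Q" and w = ?w])
      (use cycles_on_insert_decompose[OF C(3) c[unfolded k_def]] in \<open>simp add: k_def\<close>)
  ultimately show ?thesis unfolding k_def[symmetric] betti_on_def B by simp
qed

lemma betti_on_insert_bounding_below:
  assumes C: "Q \<notin> C" and Q: "bd_bounds_rationally C Q" "cube_dim Q = Suc q"
  shows "betti_on (insert Q C) q = betti_on C q"
proof -
  obtain m c where m: "m \<noteq> 0" and c: "c \<in> chains_on C (Suc q)" "chain_bd c = (\<lambda>P. m * cube_bd Q P)"
    using Q by (auto simp: bd_bounds_rationally_def)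
  have "(\<lambda>P. m * cube_bd Q P) \<in> boundaries_on C q"
    using c unfolding boundaries_on_def by (metis image_eqI)
  then have "rank_mod (cycles_on C q) (adjoin (boundaries_on C q) (cube_bd Q)) = rank_mod (cycles_on C q) (boundaries_on C q)"
    by (rule rank_mod_adjoin_torsion[OF submodule_boundaries_on m])
  moreover have "cycles_on (insert Q C) q = cycles_on C q"
    using Q(2) by (simp add: cycles_on_def chains_on_insert_other)
  ultimately show ?thesis by (simp add: betti_on_def boundaries_on_insert[OF C Q(2)])
qed

lemma betti_on_insert_nonbounding_top:
  assumes C: "Q \<notin> C" and Q: "\<not> bd_bounds_rationally C Q"
  shows "betti_on (insert Q C) (cube_dim Q) = betti_on C (cube_dim Q)"
proof -
  let ?k = "cube_dim Q"
  have "x \<in> cycles_on C ?k" if x: "x \<in> cycles_on (insert Q C) ?k" for x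
  proof -
    have xc: "x \<in> chains_on (insert Q C) ?k" and xb: "chain_bd x = (\<lambda>_. 0)"
      using x by (auto simp: cycles_on_def)
    have x0: "x(Q := 0) \<in> chains_on C ?k" by (rule fun_upd_zero_mem_chains_on[OF xc C])
    have "chain_bd (x(Q := 0)) = (\<lambda>P. (- x Q) * cube_bd Q P)"
      using chain_bd_fun_upd_zero[OF chains_on_finite_supp[OF xc], of _ Q] xb
      by (simp add: fun_eq_iff eq_neg_iff_add_eq_0)
    then have "x Q = 0"
      using Q x0 unfolding bd_bounds_rationally_def by (metis neg_equal_0_iff_equal)
    then have "x = x(Q := 0)" by (simp add: fun_eq_iff)
    then show ?thesis using x0 xb by (simp add: cycles_on_def)
  qed
  then have "cycles_on (insert Q C) ?k = cycles_on C ?k"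
    using chains_on_mono[of C "insert Q C" ?k] by (auto simp: cycles_on_def)
  then show ?thesis by (simp add: betti_on_def boundaries_on_def chains_on_insert_other)
qed

lemma betti_on_insert_nonbounding_below:
  assumes C: "finite C" "Q \<notin> C" and faces: "\<forall>P. cube_bd Q P \<noteq> 0 \<longrightarrow> P \<in> C"
    and Q: "\<not> bd_bounds_rationally C Q" "cube_dim Q = Suc q"
  shows "Suc (betti_on (insert Q C) q) = betti_on C q"
proof -
  have "P \<in> C \<and> cube_dim P = q" if "cube_bd Q P \<noteq> 0" for P
    using faces that cube_dim_bd_nonzero[OF that] Q(2) by simp
  then have "cube_bd Q \<in> chains_on C q" using finite_chain_supp_cube_bd by (simp add: chains_on_def)
  then have v: "cube_bd Q \<in> cycles_on C q" by (simp add: cycles_on_def chain_bd_cube_bd)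
  have "t = 0" if tB: "(\<lambda>P. t * cube_bd Q P) \<in> boundaries_on C q" for t
  proof -
    obtain c where c: "c \<in> chains_on C (Suc q)" "(\<lambda>P. t * cube_bd Q P) = chain_bd c"
      using tB unfolding boundaries_on_def by blast
    show "t = 0"
    proof (rule ccontr)
      assume "t \<noteq> 0"
      with c have "bd_bounds_rationally C Q"
        unfolding bd_bounds_rationally_def Q(2) by (intro exI[of _ t] exI[of _ c]) simp
      with Q(1) show False ..
    qed
  qed
  then have "Suc (rank_mod (cycles_on C q) (adjoin (boundaries_on C q) (cube_bd Q)))
      = rank_mod (cycles_on C q) (boundaries_on C q)"
    using rank_mod_adjoin_boundary[OF submodule_boundaries_on _ v]
      finite_rank_mod_cycles_on[OF C(1) submodule_zero[OF submodule_boundaries_on]] by blast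
  moreover have "cycles_on (insert Q C) q = cycles_on C q"
    using Q(2) by (simp add: cycles_on_def chains_on_insert_other)
  ultimately show ?thesis by (simp add: betti_on_def boundaries_on_insert[OF C(2) Q(2)])
qed

definition betti_jump :: "bool \<Rightarrow> nat \<Rightarrow> nat \<Rightarrow> int" where
  "betti_jump bounds k q = (if bounds then of_bool (q = k) else - of_bool (Suc q = k))"

lemma betti_on_insert:
  assumes C: "face_closed C" "finite C" "Q \<notin> C" and faces: "\<forall>P. cube_bd Q P \<noteq> 0 \<longrightarrow> P \<in> C"
  shows "int (betti_on (insert Q C) q) - int (betti_on C q)
    = betti_jump (bd_bounds_rationally C Q) (cube_dim Q) q"
proof -
  consider "q = cube_dim Q" | "cube_dim Q = Suc q" | "q \<noteq> cube_dim Q \<and> cube_dim Q \<noteq> Suc q" by blast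
  then show ?thesis
  proof cases
    case 1
    then show ?thesis
      using betti_on_insert_bounding_top[OF C] betti_on_insert_nonbounding_top[OF C(3)]
      by (cases "bd_bounds_rationally C Q") (simp_all add: betti_jump_def)
  next
    case 2
    show ?thesis
    proof (cases "bd_bounds_rationally C Q")
      case True
      then show ?thesis using betti_on_insert_bounding_below[OF C(3) True 2] 2 by (simp add: betti_jump_def)
    next
      case False
      have "Suc (betti_on (insert Q C) q) = betti_on C q"
        by (rule betti_on_insert_nonbounding_below[OF C(2,3) faces False 2])
      then show ?thesis using False 2 by (simp add: betti_jump_def)
    qed
  next
    case 3
    then show ?thesis using betti_on_insert_other[of Q q C] by (auto simp: betti_jump_def)
  qed
qed

section \<open>Stabilisation along exhausting sequences\<close>

definition exhausting :: "nat \<Rightarrow> (nat \<Rightarrow> ecube set) \<Rightarrow> bool" where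
  "exhausting d K \<longleftrightarrow> (\<forall>n. finite (K n) \<and> face_closed (K n)) \<and>
     (\<forall>R. length R = d \<longrightarrow> (\<forall>\<^sub>F n in sequentially. R \<in> K n))"

definition stable_betti_gap :: "nat \<Rightarrow> nat \<Rightarrow> ecube set \<Rightarrow> ecube set \<Rightarrow> bool" where
  "stable_betti_gap d q C' C \<longleftrightarrow> (\<exists>\<Delta>. \<forall>K. exhausting d K \<longrightarrow>
     (\<forall>\<^sub>F n in sequentially. int (betti_on (C' \<inter> K n) q) - int (betti_on (C \<inter> K n) q) = \<Delta>))"

lemma stable_betti_gap_refl: "stable_betti_gap d q C C"
  by (auto simp: stable_betti_gap_def)

lemma stable_betti_gap_sym: "stable_betti_gap d q C' C \<Longrightarrow> stable_betti_gap d q C C'"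
proof -
  assume "stable_betti_gap d q C' C"
  then obtain \<Delta> where e: "\<forall>K. exhausting d K \<longrightarrow>
     (\<forall>\<^sub>F n in sequentially. int (betti_on (C' \<inter> K n) q) - int (betti_on (C \<inter> K n) q) = \<Delta>)"
    unfolding stable_betti_gap_def by blast
  show ?thesis
    unfolding stable_betti_gap_def
  proof (intro exI[of _ "- \<Delta>"] allI impI)
    fix K assume "exhausting d K"
    with e show "\<forall>\<^sub>F n in sequentially. int (betti_on (C \<inter> K n) q) - int (betti_on (C' \<inter> K n) q) = - \<Delta>"
      by (auto elim!: eventually_mono)
  qed
qed

lemma stable_betti_gap_trans:
  assumes "stable_betti_gap d q C'' C'" "stable_betti_gap d q C' C"
  shows "stable_betti_gap d q C'' C"
proof -
  obtain \<Delta>1 \<Delta>2 where e: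
    "\<forall>K. exhausting d K \<longrightarrow> (\<forall>\<^sub>F n in sequentially. int (betti_on (C'' \<inter> K n) q) - int (betti_on (C' \<inter> K n) q) = \<Delta>1)"
    "\<forall>K. exhausting d K \<longrightarrow> (\<forall>\<^sub>F n in sequentially. int (betti_on (C' \<inter> K n) q) - int (betti_on (C \<inter> K n) q) = \<Delta>2)"
    using assms unfolding stable_betti_gap_def by blast
  then show ?thesis
    unfolding stable_betti_gap_def
  proof (intro exI[of _ "\<Delta>1 + \<Delta>2"] allI impI)
    fix K assume "exhausting d K"
    then have "\<forall>\<^sub>F n in sequentially. int (betti_on (C'' \<inter> K n) q) - int (betti_on (C' \<inter> K n) q) = \<Delta>1"
      "\<forall>\<^sub>F n in sequentially. int (betti_on (C' \<inter> K n) q) - int (betti_on (C \<inter> K n) q) = \<Delta>2"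
      using e by blast+
    then show "\<forall>\<^sub>F n in sequentially. int (betti_on (C'' \<inter> K n) q) - int (betti_on (C \<inter> K n) q) = \<Delta>1 + \<Delta>2"
      by eventually_elim simp
  qed
qed

lemma bd_bounds_rationally_mono:
  "C \<subseteq> C' \<Longrightarrow> bd_bounds_rationally C Q \<Longrightarrow> bd_bounds_rationally C' Q"
  unfolding bd_bounds_rationally_def using chains_on_mono by blast

lemma eventually_bd_bounds_rationally_Int:
  assumes K: "exhausting d K" and len: "\<forall>R\<in>C. length R = d"
  shows "\<forall>\<^sub>F n in sequentially. bd_bounds_rationally (C \<inter> K n) Q = bd_bounds_rationally C Q"
proof (cases "bd_bounds_rationally C Q")
  case True
  then obtain m c where m: "m \<noteq> 0" and c: "c \<in> chains_on C (cube_dim Q)"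
    and bd: "chain_bd c = (\<lambda>P. m * cube_bd Q P)"
    by (auto simp: bd_bounds_rationally_def)
  have "\<forall>\<^sub>F n in sequentially. \<forall>R\<in>chain_supp c. R \<in> K n"
    using K len c by (intro eventually_ball_finite) (auto simp: exhausting_def chains_on_def chain_supp_def)
  then show ?thesis
  proof (rule eventually_mono)
    fix n assume "\<forall>R\<in>chain_supp c. R \<in> K n"
    then have "c \<in> chains_on (C \<inter> K n) (cube_dim Q)" using c by (auto simp: chains_on_def chain_supp_def)
    then show "bd_bounds_rationally (C \<inter> K n) Q = bd_bounds_rationally C Q"
      using True m bd unfolding bd_bounds_rationally_def by blast
  qed
next
  case False
  have "\<not> bd_bounds_rationally (C \<inter> K n) Q" for n
    using False bd_bounds_rationally_mono[of "C \<inter> K n" C Q] by blast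
  then show ?thesis using False by simp
qed

lemma stable_betti_gap_insert:
  assumes C: "face_closed C" "Q \<notin> C" and faces: "\<forall>P. cube_bd Q P \<noteq> 0 \<longrightarrow> P \<in> C"
    and len: "\<forall>R\<in>insert Q C. length R = d"
  shows "stable_betti_gap d q (insert Q C) C"
  unfolding stable_betti_gap_def
proof (intro exI allI impI)
  fix K assume K: "exhausting d K"
  have "\<forall>\<^sub>F n in sequentially. Q \<in> K n" using K len by (simp add: exhausting_def)
  moreover have "\<forall>\<^sub>F n in sequentially. bd_bounds_rationally (C \<inter> K n) Q = bd_bounds_rationally C Q"
    using eventually_bd_bounds_rationally_Int[OF K] len by simp
  ultimately show "\<forall>\<^sub>F n in sequentially. int (betti_on (insert Q C \<inter> K n) q) - int (betti_on (C \<inter> K n) q)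
      = betti_jump (bd_bounds_rationally C Q) (cube_dim Q) q"
  proof eventually_elim
    case (elim n)
    have Kn: "finite (K n)" "face_closed (K n)" using K by (auto simp: exhausting_def)
    then have "face_closed (C \<inter> K n)" using C(1) by (auto simp: face_closed_def)
    moreover have "\<forall>P. cube_bd Q P \<noteq> 0 \<longrightarrow> P \<in> C \<inter> K n"
      using faces Kn(2) elim(1) by (auto simp: face_closed_def)
    moreover have "insert Q C \<inter> K n = insert Q (C \<inter> K n)" using elim(1) by auto
    ultimately show ?case using betti_on_insert[of "C \<inter> K n" Q q] Kn(1) C(2) elim(2) by simp
  qed
qed

lemma face_closed_Un_remove_maximal:
  assumes closed: "face_closed (C \<union> insert x S)" "face_closed C" and x: "x \<notin> C"
    and max: "\<forall>y\<in>S. cube_dim y \<le> cube_dim x"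
  shows "face_closed (C \<union> S)" "\<forall>P. cube_bd x P \<noteq> 0 \<longrightarrow> P \<in> C \<union> S"
proof -
  have "P \<noteq> x" if "R \<in> C \<union> S" "cube_bd R P \<noteq> 0" for R P
  proof
    assume "P = x"
    show False
    proof (cases "R \<in> C")
      case True then show False using closed(2) that(2) x \<open>P = x\<close> by (auto simp: face_closed_def)
    next
      case False
      then have "cube_dim R \<le> cube_dim x" using that(1) max by blast
      then show False using cube_dim_bd_nonzero[OF that(2)] \<open>P = x\<close> by simp
    qed
  qed
  then show "face_closed (C \<union> S)" using closed(1) unfolding face_closed_def by blast
  show "\<forall>P. cube_bd x P \<noteq> 0 \<longrightarrow> P \<in> C \<union> S"
  proof (intro allI impI)
    fix P assume P: "cube_bd x P \<noteq> 0"
    then have "P \<in> C \<union> insert x S" using closed(1) unfolding face_closed_def by blast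
    moreover have "P \<noteq> x" using cube_dim_bd_nonzero[OF P] by auto
    ultimately show "P \<in> C \<union> S" by blast
  qed
qed

lemma stable_betti_gap_finite_diff:
  assumes C: "C \<subseteq> C'" "finite (C' - C)" "face_closed C" "face_closed C'"
    and len: "\<forall>R\<in>C'. length R = d"
  shows "stable_betti_gap d q C' C"
proof -
  have step: "stable_betti_gap d q (C \<union> S) C"
    if "finite S" "S \<subseteq> C' - C" "face_closed (C \<union> S)" for S
    using that
  proof (induction S rule: finite_ranking_induct[where f = cube_dim])
    case empty
    then show ?case by (simp add: stable_betti_gap_refl)
  next
    case (insert x S)
    show ?case
    proof (cases "x \<in> S")
      case True
      then show ?thesis using insert by (simp add: insert_absorb)
    next
      case False
      have x: "x \<notin> C" using insert.prems(1) by blast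
      have "\<forall>y\<in>S. cube_dim y \<le> cube_dim x" using insert.hyps(2) by blast
      note closed = face_closed_Un_remove_maximal[OF insert.prems(2) C(3) x this]
      have "S \<subseteq> C' - C" using insert.prems(1) by blast
      then have "stable_betti_gap d q (C \<union> S) C" using closed(1) by (rule insert.IH)
      moreover have "stable_betti_gap d q (insert x (C \<union> S)) (C \<union> S)"
        using closed(2) x False insert.prems(1) C(1) len
        by (intro stable_betti_gap_insert closed(1)) auto
      ultimately show ?thesis using stable_betti_gap_trans by (metis Un_insert_right)
    qed
  qed
  have "C \<union> (C' - C) = C'" using C(1) by blast
  then show ?thesis using step[of "C' - C"] C(2,4) by simp
qed

section \<open>Boxes\<close>

lemma cubes_in_Int: "cubes_in d (A \<inter> B) = cubes_in d A \<inter> cubes_in d B"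
  by (auto simp: cubes_in_def)

lemma face_closed_Un: "face_closed A \<Longrightarrow> face_closed B \<Longrightarrow> face_closed (A \<union> B)"
  by (auto simp: face_closed_def)

lemma lower_corner_mem_realize: "map (\<lambda>p. real_of_int (fst p)) R \<in> realize R"
  by (simp add: realize_def)

lemma finite_cubes_meeting_bounded:
  assumes "bounded_set d S"
  shows "finite {R. length R = d \<and> realize R \<inter> S \<noteq> {}}"
proof -
  obtain r where r: "\<forall>y\<in>S. \<forall>i<d. \<bar>y!i\<bar> \<le> r" using assms by (auto simp: bounded_set_def)
  let ?T = "{- \<lceil>r\<rceil> - 1 .. \<lceil>r\<rceil>}"
  have "{R. length R = d \<and> realize R \<inter> S \<noteq> {}} \<subseteq> {R. set R \<subseteq> ?T \<times> UNIV \<and> length R = d}"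
  proof
    fix R assume "R \<in> {R. length R = d \<and> realize R \<inter> S \<noteq> {}}"
    then obtain y where len: "length R = d" and y: "y \<in> realize R" "y \<in> S" by auto
    have "fst (R!i) \<in> ?T" if i: "i < d" for i
    proof -
      have "real_of_int (fst (R!i)) \<le> y!i" "y!i \<le> real_of_int (fst (R!i)) + 1"
        using y(1) i len by (auto simp: realize_def split: if_splits)
      moreover have "\<bar>y!i\<bar> \<le> r" using r y(2) i by blast
      ultimately have "real_of_int (fst (R!i)) \<le> real_of_int \<lceil>r\<rceil>"
        "real_of_int (- \<lceil>r\<rceil> - 1) \<le> real_of_int (fst (R!i))"
        using le_of_int_ceiling[of r] by linarith+
      then show ?thesis by (simp only: of_int_le_iff atLeastAtMost_iff)
    qed
    then have "set R \<subseteq> ?T \<times> UNIV" using len by (auto simp: in_set_conv_nth) (metis fst_conv)+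
    then show "R \<in> {R. set R \<subseteq> ?T \<times> UNIV \<and> length R = d}" using len by simp
  qed
  then show ?thesis by (rule finite_subset) (simp add: finite_lists_length_eq)
qed

lemma bounded_box: "bounded_set d (box d x m)"
  unfolding bounded_set_def box_def
proof (intro exI[of _ "(\<Sum>i<d. \<bar>real_of_int (x!i)\<bar>) + real m"] ballI allI impI)
  fix y i assume y: "y \<in> {y. length y = d \<and> (\<forall>i<d. \<bar>y!i - real_of_int (x!i)\<bar> \<le> real m)}" and i: "i < d"
  have "\<bar>real_of_int (x!i)\<bar> \<le> (\<Sum>i<d. \<bar>real_of_int (x!i)\<bar>)"
    using i by (intro member_le_sum) auto
  then show "\<bar>y!i\<bar> \<le> (\<Sum>i<d. \<bar>real_of_int (x!i)\<bar>) + real m" using y i by auto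
qed

lemma finite_cubes_in_box: "finite (cubes_in d (box d x m))"
  by (rule finite_subset[OF _ finite_cubes_meeting_bounded[OF bounded_box[of d x m]]])
    (use lower_corner_mem_realize in \<open>auto simp: cubes_in_def\<close>)

lemma finite_cubes_in_Diff:
  assumes "bounded_set d ((X - Y) \<union> (Y - X))"
  shows "finite (cubes_in d X - cubes_in d Y)"
  by (rule finite_subset[OF _ finite_cubes_meeting_bounded[OF assms]]) (auto simp: cubes_in_def)

lemma exhausting_boxes:
  assumes "\<forall>z :: int list. length z = d \<longrightarrow> (\<exists>N. \<forall>n\<ge>N. map real_of_int z \<in> box d (x n) (m n))"
  shows "exhausting d (\<lambda>n. cubes_in d (box d (x n) (m n)))"
  unfolding exhausting_def
proof (intro conjI allI impI)
  fix n
  show "finite (cubes_in d (box d (x n) (m n)))" by (rule finite_cubes_in_box)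
  show "face_closed (cubes_in d (box d (x n) (m n)))" by (rule face_closed_cubes_in)
next
  fix R :: ecube assume len: "length R = d"
  let ?lo = "map fst R" and ?up = "map (\<lambda>p. fst p + (if snd p then 1 else 0)) R"
  have "\<forall>\<^sub>F n in sequentially. map real_of_int ?lo \<in> box d (x n) (m n) \<and> map real_of_int ?up \<in> box d (x n) (m n)"
    using assms len unfolding eventually_sequentially
    by (metis (no_types, lifting) length_map max.bounded_iff nat_le_linear)
  then show "\<forall>\<^sub>F n in sequentially. R \<in> cubes_in d (box d (x n) (m n))"
  proof (rule eventually_mono)
    fix n assume corners: "map real_of_int ?lo \<in> box d (x n) (m n) \<and> map real_of_int ?up \<in> box d (x n) (m n)"
    have "y \<in> box d (x n) (m n)" if y: "y \<in> realize R" for y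
    proof -
      have "\<bar>y!i - real_of_int (x n!i)\<bar> \<le> real (m n)" if i: "i < d" for i
      proof -
        have "real_of_int (fst (R!i)) \<le> y!i" "y!i \<le> real_of_int (fst (R!i) + (if snd (R!i) then 1 else 0))"
          using y i len by (auto simp: realize_def)
        moreover have "\<bar>real_of_int (fst (R!i)) - real_of_int (x n!i)\<bar> \<le> real (m n)"
          "\<bar>real_of_int (fst (R!i) + (if snd (R!i) then 1 else 0)) - real_of_int (x n!i)\<bar> \<le> real (m n)"
          using corners i len by (auto simp: box_def)
        ultimately show ?thesis by linarith
      qed
      then show ?thesis using y len by (simp add: box_def realize_def)
    qed
    then show "R \<in> cubes_in d (box d (x n) (m n))" using len by (auto simp: cubes_in_def)
  qed
qed

lemma stable_betti_gap_cubes_in: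
  assumes "bounded_set d ((X - Y) \<union> (Y - X))"
  shows "stable_betti_gap d q (cubes_in d X) (cubes_in d Y)"
proof -
  let ?CX = "cubes_in d X" and ?CY = "cubes_in d Y"
  have closed: "face_closed ?CX" "face_closed ?CY" "face_closed (?CX \<union> ?CY)"
    by (simp_all add: face_closed_cubes_in face_closed_Un)
  have len: "\<forall>R\<in>?CX \<union> ?CY. length R = d" by (auto simp: cubes_in_def)
  have "finite (?CX \<union> ?CY - ?CX)" "finite (?CX \<union> ?CY - ?CY)"
    using finite_cubes_in_Diff[OF assms] finite_cubes_in_Diff[of d Y X] assms
    by (simp_all add: Un_Diff Un_commute)
  then have "stable_betti_gap d q (?CX \<union> ?CY) ?CX" "stable_betti_gap d q (?CX \<union> ?CY) ?CY"
    using stable_betti_gap_finite_diff closed len by blast+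
  then show ?thesis by (blast intro: stable_betti_gap_trans stable_betti_gap_sym)
qed

text \<open>Homology only sees the cubes contained in X and Y.\<close>
theorem proposition4p2:
  fixes d q :: nat and X Y :: "real list set"
  assumes "q < d" and "cubical_set d X" and "cubical_set d Y"
    and "bounded_set d ((X - Y) \<union> (Y - X))"
  shows "\<exists>\<Delta>::int. \<forall>(x :: nat \<Rightarrow> int list) (m :: nat \<Rightarrow> nat).
     ((\<forall>n. length (x n) = d) \<and>
      (\<forall>z :: int list. length z = d \<longrightarrow>
          (\<exists>N. \<forall>n\<ge>N. map real_of_int z \<in> box d (x n) (m n))))
     \<longrightarrow> (\<exists>n0. \<forall>n\<ge>n0. int (betti d q (X \<inter> box d (x n) (m n)))
                          - int (betti d q (Y \<inter> box d (x n) (m n))) = \<Delta>)"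
proof -
  obtain \<Delta> where \<Delta>: "\<And>K. exhausting d K \<Longrightarrow> \<forall>\<^sub>F n in sequentially.
      int (betti_on (cubes_in d X \<inter> K n) q) - int (betti_on (cubes_in d Y \<inter> K n) q) = \<Delta>"
    using stable_betti_gap_cubes_in[OF assms(4)] unfolding stable_betti_gap_def by blast
  show ?thesis
  proof (intro exI[of _ \<Delta>] allI impI)
    fix x :: "nat \<Rightarrow> int list" and m :: "nat \<Rightarrow> nat"
    assume "(\<forall>n. length (x n) = d) \<and> (\<forall>z :: int list. length z = d \<longrightarrow>
        (\<exists>N. \<forall>n\<ge>N. map real_of_int z \<in> box d (x n) (m n)))"
    then have "exhausting d (\<lambda>n. cubes_in d (box d (x n) (m n)))" by (intro exhausting_boxes) blast
    from \<Delta>[OF this] show "\<exists>n0. \<forall>n\<ge>n0. int (betti d q (X \<inter> box d (x n) (m n)))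
        - int (betti d q (Y \<inter> box d (x n) (m n))) = \<Delta>"
      by (simp add: eventually_sequentially betti_eq_betti_on cubes_in_Int)
  qed
qed

end
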